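(* Under the model below, for all times $t\ge 0$ and every user $k$, $$W_k(0,t) - \hat W_k(0,t) \le (2M-1)L.$$
   Context: Model. There are $K$ users (sessions) with separate FIFO queues, and $N$ servers (subcarriers), each transmitting $r$ bits per unit time, so the total service rate is $Nr$. All packets have the same length $L$ bits. Transmissions are error free. The same packet arrival sequence is fed to two systems, starting empty at time $0$. GPS (generalized processor sharing): a fluid system of total rate $Nr$; each user $k$ has a weight $\phi_k>0$, and at every instant each backlogged user $k$ is served at rate $Nr\,\phi_k/\sum_{j\in B}\phi_j$, where $B$ is the set of currently backlogged users. MPGPS (multi-server packetized GPS) with parameter $M\ge 1$: it is work conserving (servers are never idle while packets are queued). Whenever the servers become idle at a time $\tau$, among all packets queued at $\tau$ it selects the $\min\big(M,\sum_{k}\hat Q_k(\tau)\big)$ packets that would be the first to complete service in the corresponding GPS system if no further packets arrived after $\tau$ ($\hat Q_k(\tau)$ is the number of user-$k$ packets queued under MPGPS at $\tau$). These selected packets form one batch; a batch of $M_h$ packets is transmitted jointly over all $N$ servers at aggregate rate $Nr$, occupying the servers for $M_hL/(Nr)$ time units. $W_k(t_1,t_2)$ (resp. $\hat W_k(t_1,t_2)$) denotes the number of bits of user $k$ served during $(t_1,t_2)$ under GPS (resp. MPGPS). *)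

theory Defs
  imports "HOL-Analysis.Analysis"
begin

text \<open>Packets are pairs (k, i): the i-th (0-based) packet of user k.
  P is the set of packets that ever arrive, a p their arrival times.\<close>

definition cum_arr :: "(nat \<times> nat) set \<Rightarrow> (nat \<times> nat \<Rightarrow> real) \<Rightarrow> real \<Rightarrow> nat \<Rightarrow> real \<Rightarrow> real" where
  "cum_arr P a L k t = L * real (card {i. (k, i) \<in> P \<and> a (k, i) \<le> t})"

definition gps_rate :: "nat \<Rightarrow> (nat \<Rightarrow> real) \<Rightarrow> nat \<Rightarrow> real \<Rightarrow> (nat \<Rightarrow> real \<Rightarrow> real)
    \<Rightarrow> (nat \<Rightarrow> real \<Rightarrow> real) \<Rightarrow> nat \<Rightarrow> real \<Rightarrow> real" where
  "gps_rate K \<phi> N r A W k s =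
     (if W k s < A k s
      then real N * r * \<phi> k / (\<Sum>j\<in>{j. j < K \<and> W j s < A j s}. \<phi> j)
      else 0)"

text \<open>W is the GPS (fluid) service process for arrivals A: W k t = W_k(0,t).\<close>
definition is_gps :: "nat \<Rightarrow> (nat \<Rightarrow> real) \<Rightarrow> nat \<Rightarrow> real \<Rightarrow> (nat \<Rightarrow> real \<Rightarrow> real)
    \<Rightarrow> (nat \<Rightarrow> real \<Rightarrow> real) \<Rightarrow> bool" where
  "is_gps K \<phi> N r A W \<longleftrightarrow>
     (\<forall>k<K. \<forall>t\<ge>0. (gps_rate K \<phi> N r A W k has_integral W k t) {0..t})"

definition gps_finish :: "(nat \<Rightarrow> real \<Rightarrow> real) \<Rightarrow> real \<Rightarrow> nat \<times> nat \<Rightarrow> real" where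
  "gps_finish W L p = Inf {t. 0 \<le> t \<and> real (Suc (snd p)) * L \<le> W (fst p) t}"

definition batch_end :: "real \<Rightarrow> nat \<Rightarrow> real \<Rightarrow> (nat \<Rightarrow> real) \<Rightarrow> (nat \<Rightarrow> (nat \<times> nat) set) \<Rightarrow> nat \<Rightarrow> real" where
  "batch_end L N r s S h = s h + real (card (S h)) * L / (real N * r)"

definition served_before :: "(nat \<Rightarrow> (nat \<times> nat) set) \<Rightarrow> nat \<Rightarrow> (nat \<times> nat) set" where
  "served_before S h = (\<Union>h'<h. S h')"

definition queued_at :: "(nat \<times> nat) set \<Rightarrow> (nat \<times> nat \<Rightarrow> real) \<Rightarrow> (nat \<Rightarrow> real)
    \<Rightarrow> (nat \<Rightarrow> (nat \<times> nat) set) \<Rightarrow> nat \<Rightarrow> (nat \<times> nat) set" where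
  "queued_at P a s S h = {p \<in> P. a p \<le> s h} - served_before S h"

text \<open>The MPGPS schedule: batches h < nb (nb possibly infinite), batch h starts at s h
  and consists of the packet set S h.  Wt \<tau> is the GPS service process when no
  packets arrive after \<tau> (arrivals at \<tau> included).\<close>
definition is_mpgps :: "(nat \<times> nat) set \<Rightarrow> (nat \<times> nat \<Rightarrow> real) \<Rightarrow> real \<Rightarrow> nat \<Rightarrow> real \<Rightarrow> nat
    \<Rightarrow> (real \<Rightarrow> nat \<Rightarrow> real \<Rightarrow> real) \<Rightarrow> (nat \<Rightarrow> real) \<Rightarrow> (nat \<Rightarrow> (nat \<times> nat) set) \<Rightarrow> enat \<Rightarrow> bool" where
  "is_mpgps P a L N r M Wt s S nb \<longleftrightarrow>
     (\<forall>h. enat h < nb \<longrightarrow>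
        S h \<noteq> {} \<and>
        S h \<subseteq> queued_at P a s S h \<and>
        card (S h) = min M (card (queued_at P a s S h)) \<and>
        (\<forall>p\<in>S h. \<forall>q\<in>queued_at P a s S h - S h.
            gps_finish (Wt (s h)) L p \<le> gps_finish (Wt (s h)) L q) \<and>
        s h = max (if h = 0 then 0 else batch_end L N r s S (h - 1))
                  (Inf (a ` (P - served_before S h)))) \<and>
     (\<forall>n. nb = enat n \<longrightarrow> served_before S n = P)"

text \<open>MPGPS service of user k in (0, t): each packet of a batch of size m is
  served at rate N r / m during the batch.\<close>
definition mpgps_served :: "real \<Rightarrow> nat \<Rightarrow> real \<Rightarrow> (nat \<Rightarrow> real) \<Rightarrow> (nat \<Rightarrow> (nat \<times> nat) set)
    \<Rightarrow> enat \<Rightarrow> nat \<Rightarrow> real \<Rightarrow> real" where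
  "mpgps_served L N r s S nb k t =
     (\<Sum>(h, p)\<in>{(h, p). enat h < nb \<and> p \<in> S h \<and> fst p = k \<and> s h < t}.
        min L (max 0 ((t - s h) * (real N * r) / real (card (S h)))))"

end

theory Submission
  imports Defs
begin

text \<open>The argument follows Parekh and Gallager's analysis of packetized GPS.  Order
  preservation: if GPS has finished packet q but not packet p by time T, and both had arrived
  by \<tau>, then q also finishes before p in the GPS system that receives no arrivals after \<tau>.
  Since MPGPS selects the packets that finish first in that frozen system, whenever GPS has
  finished a packet that MPGPS leaves queued, it has also finished the ones MPGPS selects.  Now let GPS finish p by T and let MPGPS send
  p in batch h.  Going back from h to a suitable batch c, the batches c, ..., h are sent
  without gaps and, apart from at most 2M - 1 packets, consist of packets that GPS finishes by
  T and that arrived after batch c started.  GPS needs their total length divided by N r to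
  serve them, so batch h ends by T + (2M - 1) L / (N r).  Hence at time t every packet finished
  by GPS at t - (2M - 1) L / (N r) has been sent completely, which bounds the lag by
  (2M - 1) L.\<close>

lemma finite_down_closed_eq_lessThan:
  fixes D :: "nat set"
  assumes "finite D" and down: "\<And>i j. i \<in> D \<Longrightarrow> j < i \<Longrightarrow> j \<in> D"
  shows "D = {..<card D}"
proof (cases "D = {}")
  case False
  have "D = {..Max D}"
    using Max_ge[OF assms(1)] down[OF Max_in[OF assms(1) False]] Max_in[OF assms(1) False]
    by (auto simp: le_less)
  then show ?thesis by (metis card_atMost lessThan_Suc_atMost)
qed simp

lemma card_levels_crossed_le:
  fixes L w w0 :: real
  assumes "finite Y" and levels: "\<And>i. i \<in> Y \<Longrightarrow> n \<le> i \<and> real (Suc i) * L \<le> w"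
    and "w0 \<le> real n * L" "w0 \<le> w" "0 < L"
  shows "real (card Y) * L \<le> w - w0"
proof (cases "Y = {}")
  case False
  define m where "m = Max Y"
  have m: "m \<in> Y" unfolding m_def using Max_in[OF assms(1) False] .
  have "Y \<subseteq> {n..m}" using levels Max_ge[OF assms(1)] unfolding m_def by auto
  then have "card Y \<le> Suc m - n" using card_mono[of "{n..m}" Y] by simp
  then have "real (card Y) \<le> real (Suc m) - real n" using levels[OF m] by linarith
  then have "real (card Y) * L \<le> (real (Suc m) - real n) * L"
    using \<open>0 < L\<close> by (intro mult_right_mono) auto
  then have "real (card Y) * L \<le> real (Suc m) * L - real n * L" by (simp only: left_diff_distrib)
  then show ?thesis using levels[OF m] assms(3) by linarith
qed (use assms in simp)

lemma finite_of_disjoint_nonempty_subsets: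
  assumes "finite D" and sub: "\<And>i. i \<in> I \<Longrightarrow> F i \<noteq> {} \<and> F i \<subseteq> D"
    and disj: "disjoint_family_on F I"
  shows "finite I"
proof (rule inj_on_finite[OF _ _ \<open>finite D\<close>])
  show "inj_on (\<lambda>i. SOME x. x \<in> F i) I"
  proof (rule inj_onI)
    fix i j assume "i \<in> I" "j \<in> I" "(SOME x. x \<in> F i) = (SOME x. x \<in> F j)"
    then have "(SOME x. x \<in> F i) \<in> F i \<inter> F j" using sub by (metis IntI ex_in_conv someI_ex)
    then show "i = j" using disj \<open>i \<in> I\<close> \<open>j \<in> I\<close> by (auto dest: disjoint_family_onD)
  qed
  show "(\<lambda>i. SOME x. x \<in> F i) ` I \<subseteq> D"
  proof
    fix y assume "y \<in> (\<lambda>i. SOME x. x \<in> F i) ` I"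
    then obtain i where "i \<in> I" "y = (SOME x. x \<in> F i)" by blast
    then show "y \<in> D" using sub[of i] some_in_eq[of "F i"] by auto
  qed
qed

lemma nat_floor_divide_bounds:
  fixes w L :: real
  assumes "0 \<le> w" "0 < L"
  shows "real (nat \<lfloor>w / L\<rfloor>) * L \<le> w" "w < real (Suc (nat \<lfloor>w / L\<rfloor>)) * L"
proof -
  have "real (nat \<lfloor>w / L\<rfloor>) = of_int \<lfloor>w / L\<rfloor>" using assms by simp
  then have "real (nat \<lfloor>w / L\<rfloor>) \<le> w / L" "w / L < real (nat \<lfloor>w / L\<rfloor>) + 1"
    using of_int_floor_le[of "w / L"] real_of_int_floor_add_one_gt[of "w / L"] by linarith+
  then show "real (nat \<lfloor>w / L\<rfloor>) * L \<le> w" "w < real (Suc (nat \<lfloor>w / L\<rfloor>)) * L"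
    using assms(2) by (simp_all add: field_simps)
qed

text \<open>A packet of a batch of m packets starting at s is served at rate R / m until s + m L / R.\<close>

lemma packet_service_ge:
  fixes R L m s t :: real
  assumes "0 < R" "0 < L" "1 \<le> m"
  shows "L - R * max 0 (s + m * L / R - t) \<le> min L (max 0 ((t - s) * R / m))"
proof (cases "s + m * L / R \<le> t")
  case True
  then have "L \<le> (t - s) * R / m" using assms by (simp add: field_simps)
  then show ?thesis using True by simp
next
  case False
  define x where "x = s + m * L / R - t"
  have "0 < x" using False unfolding x_def by simp
  have "(t - s) * R / m = L - x * R / m" unfolding x_def using assms by (simp add: field_simps)
  moreover have "x * R / m \<le> x * R / 1"
    using assms \<open>0 < x\<close> by (intro divide_left_mono) auto
  ultimately have "L - R * x \<le> max 0 ((t - s) * R / m)" by (simp add: mult.commute)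
  moreover have "L - R * x \<le> L" using \<open>0 < x\<close> assms by simp
  ultimately show ?thesis using \<open>0 < x\<close> unfolding x_def[symmetric] by simp
qed

section \<open>GPS fluid systems\<close>

locale gps_system =
  fixes K :: nat and \<phi> :: "nat \<Rightarrow> real" and N :: nat and r :: real
    and A W :: "nat \<Rightarrow> real \<Rightarrow> real"
  assumes weight_pos: "\<And>k. k < K \<Longrightarrow> \<phi> k > 0"
    and capacity_pos: "real N * r > 0"
    and arrivals_mono: "\<And>k s t. k < K \<Longrightarrow> 0 \<le> s \<Longrightarrow> s \<le> t \<Longrightarrow> A k s \<le> A k t"
    and arrivals_nonneg: "\<And>k t. k < K \<Longrightarrow> 0 \<le> t \<Longrightarrow> 0 \<le> A k t"
    and arrivals_right_constant:
      "\<And>s. 0 \<le> s \<Longrightarrow> \<exists>\<delta>>0. \<forall>u. s \<le> u \<and> u < s + \<delta> \<longrightarrow> (\<forall>k<K. A k u = A k s)"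
    and gps: "is_gps K \<phi> N r A W"
begin

abbreviation "R \<equiv> real N * r"
abbreviation "rate \<equiv> gps_rate K \<phi> N r A W"
abbreviation "backlogged s \<equiv> {j. j < K \<and> W j s < A j s}"

lemma capacity_nonzero: "R \<noteq> 0"
  using capacity_pos by linarith

lemma backlogged_weight_sum:
  assumes "k \<in> backlogged s"
  shows "\<phi> k \<le> (\<Sum>j\<in>backlogged s. \<phi> j)" "0 < (\<Sum>j\<in>backlogged s. \<phi> j)"
proof -
  have "(\<Sum>j\<in>{k}. \<phi> j) \<le> (\<Sum>j\<in>backlogged s. \<phi> j)"
    by (rule sum_mono2) (use assms weight_pos in \<open>auto intro: less_imp_le\<close>)
  then show "\<phi> k \<le> (\<Sum>j\<in>backlogged s. \<phi> j)" by simp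
  then show "0 < (\<Sum>j\<in>backlogged s. \<phi> j)" using weight_pos assms by force
qed

lemma rate_nonneg: "k < K \<Longrightarrow> 0 \<le> rate k s"
  unfolding gps_rate_def using backlogged_weight_sum weight_pos capacity_pos
  by (auto intro!: divide_nonneg_pos mult_nonneg_nonneg less_imp_le)

lemma rate_le_capacity: "k < K \<Longrightarrow> rate k s \<le> R"
proof (cases "k \<in> backlogged s")
  case True
  then have "\<phi> k \<le> (\<Sum>j\<in>backlogged s. \<phi> j)" "0 < (\<Sum>j\<in>backlogged s. \<phi> j)"
    using backlogged_weight_sum by auto
  then show ?thesis using True capacity_pos by (simp add: gps_rate_def divide_le_eq mult_left_mono)
qed (use capacity_pos in \<open>simp add: gps_rate_def\<close>)

lemma sum_rate: "(\<Sum>k<K. rate k s) = (if backlogged s = {} then 0 else R)"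
proof -
  have "(\<Sum>k<K. rate k s) = (\<Sum>k\<in>backlogged s. R * \<phi> k / (\<Sum>j\<in>backlogged s. \<phi> j))"
    unfolding gps_rate_def by (rule sum.mono_neutral_cong_right) auto
  also have "\<dots> = R * (\<Sum>k\<in>backlogged s. \<phi> k) / (\<Sum>j\<in>backlogged s. \<phi> j)"
    by (simp add: sum_divide_distrib[symmetric] sum_distrib_left)
  also have "\<dots> = (if backlogged s = {} then 0 else R)"
  proof (cases "backlogged s = {}")
    case False
    then have "0 < (\<Sum>j\<in>backlogged s. \<phi> j)" using backlogged_weight_sum(2) by blast
    then show ?thesis using False by (subst if_not_P) auto
  next
    case True
    show ?thesis by (simp only: True sum.empty) simp
  qed
  finally show ?thesis .
qed

lemma rate_weighted_le:
  assumes "k0 \<in> backlogged s" "k1 < K"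
  shows "rate k1 s * \<phi> k0 \<le> rate k0 s * \<phi> k1"
proof (cases "k1 \<in> backlogged s")
  case True
  then show ?thesis using assms by (simp add: gps_rate_def mult_ac)
next
  case False
  then have "rate k1 s = 0" using assms(2) by (simp add: gps_rate_def)
  then show ?thesis using rate_nonneg[of k0 s] weight_pos[of k1] assms by simp
qed

lemma rate_has_integral_increment:
  assumes "k < K" "0 \<le> v" "v \<le> u"
  shows "(rate k has_integral (W k u - W k v)) {v..u}"
proof -
  have hu: "(rate k has_integral W k u) {0..u}" and hv: "(rate k has_integral W k v) {0..v}"
    using gps assms unfolding is_gps_def by auto
  have "rate k integrable_on {v..u}"
    using integrable_subinterval_real[OF has_integral_integrable[OF hu]] assms by auto
  then have hvu: "(rate k has_integral integral {v..u} (rate k)) {v..u}"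
    by (simp add: has_integral_integral)
  have "(rate k has_integral (W k v + integral {v..u} (rate k))) {0..u}"
    by (rule has_integral_combine[OF assms(2,3) hv hvu])
  then have "W k u = W k v + integral {v..u} (rate k)"
    using hu has_integral_unique by blast
  then show ?thesis using hvu by simp
qed

lemma service_zero: "k < K \<Longrightarrow> W k 0 = 0"
  using gps has_integral_unique[OF _ has_integral_refl(2)] unfolding is_gps_def by fastforce

lemma service_increment_bounds:
  assumes "k < K" "0 \<le> v" "v \<le> u"
  shows "0 \<le> W k u - W k v" "W k u - W k v \<le> R * (u - v)"
proof -
  have "((\<lambda>x. R) has_integral R * (u - v)) {v..u}"
    using has_integral_const_real[of R v u] assms by (simp add: mult.commute)
  then show "W k u - W k v \<le> R * (u - v)"
    by (rule has_integral_le[OF rate_has_integral_increment[OF assms]])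
       (use rate_le_capacity assms in auto)
  show "0 \<le> W k u - W k v"
    by (rule has_integral_nonneg[OF rate_has_integral_increment[OF assms]])
       (use rate_nonneg assms in auto)
qed

lemma service_mono: "k < K \<Longrightarrow> 0 \<le> v \<Longrightarrow> v \<le> u \<Longrightarrow> W k v \<le> W k u"
  using service_increment_bounds(1) by fastforce

lemma service_nonneg: "k < K \<Longrightarrow> 0 \<le> u \<Longrightarrow> 0 \<le> W k u"
  using service_mono[of k 0 u] service_zero by auto

lemma service_lipschitz:
  assumes "k < K"
  shows "R-lipschitz_on {0..} (W k)"
proof (rule lipschitz_onI)
  fix x y :: real assume "x \<in> {0..}" "y \<in> {0..}"
  then show "dist (W k x) (W k y) \<le> R * dist x y"
    using service_increment_bounds[OF assms, of x y] service_increment_bounds[OF assms, of y x]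
    by (cases "x \<le> y") (auto simp: dist_real_def abs_if)
qed (use capacity_pos in simp)

lemma service_continuous: "k < K \<Longrightarrow> continuous_on {0..} (W k)"
  using service_lipschitz by (rule lipschitz_on_continuous_on)

lemma service_ivt:
  assumes "k < K" "0 \<le> u" "u \<le> t" "W k u \<le> c" "c \<le> W k t"
  shows "\<exists>T. u \<le> T \<and> T \<le> t \<and> W k T = c"
proof -
  have "continuous_on {u..t} (W k)"
    using service_continuous[OF assms(1)] assms(2) by (auto elim!: continuous_on_subset)
  then show ?thesis using IVT'[of "W k" u c t] assms by auto
qed

lemma total_service_has_integral:
  assumes "0 \<le> v" "v \<le> u"
  shows "((\<lambda>s. \<Sum>k<K. rate k s) has_integral (\<Sum>k<K. W k u - W k v)) {v..u}"
  by (rule has_integral_sum) (use rate_has_integral_increment assms in auto)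

lemma total_service_increment_le:
  assumes "0 \<le> v" "v \<le> u"
  shows "(\<Sum>k<K. W k u - W k v) \<le> R * (u - v)"
proof -
  have "((\<lambda>x. R) has_integral R * (u - v)) {v..u}"
    using has_integral_const_real[of R v u] assms by (simp add: mult.commute)
  then show ?thesis
    by (rule has_integral_le[OF total_service_has_integral[OF assms]])
       (use sum_rate capacity_pos in auto)
qed

lemma total_service_increment_busy:
  assumes "0 \<le> v" "v \<le> u" "\<And>s. v \<le> s \<Longrightarrow> s \<le> u \<Longrightarrow> backlogged s \<noteq> {}"
  shows "R * (u - v) \<le> (\<Sum>k<K. W k u - W k v)"
proof -
  have "((\<lambda>x. R) has_integral R * (u - v)) {v..u}"
    using has_integral_const_real[of R v u] assms by (simp add: mult.commute)
  then show ?thesis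
    by (rule has_integral_le[OF _ total_service_has_integral[OF assms(1,2)]])
       (use sum_rate assms(3) in auto)
qed

text \<open>If W k t exceeded A k t, then after the last time v \<le> t with W k v \<le> A k t user k
  would not be backlogged, so W k would be constant on [v, t].\<close>

lemma service_le_arrivals:
  assumes k: "k < K" and t: "0 \<le> t"
  shows "W k t \<le> A k t"
proof (rule ccontr)
  assume "\<not> W k t \<le> A k t"
  define Z where "Z = {0..t} \<inter> W k -` {..A k t}"
  have "0 \<in> Z" unfolding Z_def using service_zero[OF k] arrivals_nonneg[OF k t] t by auto
  moreover have "closed Z" unfolding Z_def
    using service_continuous[OF k]
    by (auto intro!: continuous_closed_preimage elim: continuous_on_subset)
  moreover have bdd: "bdd_above Z" unfolding Z_def by (auto intro: bdd_aboveI[of _ t])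
  ultimately have "Sup Z \<in> Z" by (intro closed_contains_Sup) auto
  then have v: "0 \<le> Sup Z" "Sup Z \<le> t" "W k (Sup Z) \<le> A k t" unfolding Z_def by auto
  have "rate k s = 0" if "s \<in> {Sup Z..t} - {Sup Z}" for s
  proof -
    have s: "Sup Z < s" "s \<le> t" using that by auto
    then have "A k t < W k s" using cSup_upper[OF _ bdd, of s] v(1) unfolding Z_def by force
    moreover have "A k s \<le> A k t" using arrivals_mono[OF k _ s(2)] s v by auto
    ultimately show ?thesis unfolding gps_rate_def by auto
  qed
  then have "((\<lambda>s. 0) has_integral (W k t - W k (Sup Z))) {Sup Z..t}"
    by (intro has_integral_spike_finite[OF _ _ rate_has_integral_increment[OF k v(1,2)],
          of "{Sup Z}"]) auto
  then show False using \<open>\<not> W k t \<le> A k t\<close> v by simp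
qed

lemma backlogged_locally_constant:
  assumes s: "0 \<le> s"
  shows "\<exists>\<delta>>0. \<forall>u. s \<le> u \<and> u < s + \<delta> \<longrightarrow> backlogged u = backlogged s \<and> (\<forall>k<K. A k u = A k s)"
proof -
  obtain \<delta>1 where \<delta>1: "\<delta>1 > 0" "\<And>u. s \<le> u \<Longrightarrow> u < s + \<delta>1 \<Longrightarrow> \<forall>k<K. A k u = A k s"
    using arrivals_right_constant[OF s] by blast
  (* no backlogged user can clear its backlog within time \<delta>2 *)
  define \<delta>2 where "\<delta>2 = Min (insert 1 ((\<lambda>k. (A k s - W k s) / R) ` backlogged s))"
  have fin: "finite (insert 1 ((\<lambda>k. (A k s - W k s) / R) ` backlogged s))" by auto
  have \<delta>2_pos: "\<delta>2 > 0" unfolding \<delta>2_def using capacity_pos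
    by (subst Min_gr_iff[OF fin]) (auto intro!: divide_pos_pos)
  have \<delta>2_le: "\<delta>2 \<le> (A k s - W k s) / R" if "k \<in> backlogged s" for k
    unfolding \<delta>2_def using that fin by (auto intro!: Min_le)
  have "\<forall>u. s \<le> u \<and> u < s + min \<delta>1 \<delta>2 \<longrightarrow> backlogged u = backlogged s \<and> (\<forall>k<K. A k u = A k s)"
  proof (intro allI impI)
    fix u assume u: "s \<le> u \<and> u < s + min \<delta>1 \<delta>2"
    have A_eq: "\<forall>k<K. A k u = A k s"
      by (rule \<delta>1(2)) (use u min.cobounded1[of \<delta>1 \<delta>2] in linarith)+
    have "backlogged u = backlogged s"
    proof (intro set_eqI iffI)
      fix k assume "k \<in> backlogged u"
      then show "k \<in> backlogged s" using service_mono[of k s u] A_eq u s by fastforce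
    next
      fix k assume kB: "k \<in> backlogged s"
      then have k: "k < K" by auto
      have "W k u - W k s \<le> R * (u - s)" using service_increment_bounds[OF k s] u by auto
      also have "\<dots> < R * \<delta>2" using u capacity_pos by (auto intro!: mult_strict_left_mono)
      also have "\<dots> \<le> A k s - W k s" using \<delta>2_le[OF kB] capacity_pos by (simp add: field_simps)
      finally show "k \<in> backlogged u" using A_eq k by auto
    qed
    with A_eq show "backlogged u = backlogged s \<and> (\<forall>k<K. A k u = A k s)" by (rule conjI[rotated])
  qed
  moreover have "0 < min \<delta>1 \<delta>2" using \<delta>1(1) \<delta>2_pos by simp
  ultimately show ?thesis by (intro exI[of _ "min \<delta>1 \<delta>2"] conjI)
qed

lemma service_locally_linear:
  assumes s: "0 \<le> s"
  shows "\<exists>\<delta>>0. \<forall>u. s \<le> u \<and> u < s + \<delta> \<longrightarrow> (\<forall>k<K. W k u = W k s + rate k s * (u - s))"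
proof -
  obtain \<delta> where \<delta>: "\<delta> > 0"
    "\<And>u. s \<le> u \<Longrightarrow> u < s + \<delta> \<Longrightarrow> backlogged u = backlogged s \<and> (\<forall>k<K. A k u = A k s)"
    using backlogged_locally_constant[OF s] by blast
  have rate_const: "rate k u = rate k s" if "s \<le> u" "u < s + \<delta>" "k < K" for k u
  proof -
    have b: "backlogged u = backlogged s" using \<delta>(2)[OF that(1,2)] by blast
    have "(k \<in> backlogged u) = (k \<in> backlogged s)" by (simp only: b)
    then have e: "(W k u < A k u) = (W k s < A k s)" using that(3) by simp
    show ?thesis unfolding gps_rate_def by (simp only: e b)
  qed
  have linear: "\<forall>u. s \<le> u \<and> u < s + \<delta> \<longrightarrow> (\<forall>k<K. W k u = W k s + rate k s * (u - s))"
  proof (intro allI impI)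
    fix u k assume u: "s \<le> u \<and> u < s + \<delta>" and k: "k < K"
    have "((\<lambda>x. rate k s) has_integral (W k u - W k s)) {s..u}"
    proof (rule has_integral_eq[OF _ rate_has_integral_increment[OF k s]])
      fix x assume "x \<in> {s..u}"
      then show "rate k x = rate k s" using u k by (intro rate_const) auto
    qed (use u in simp)
    moreover have "((\<lambda>x. rate k s) has_integral (rate k s * (u - s))) {s..u}"
      using has_integral_const_real[of "rate k s" s u] u by (simp add: mult.commute)
    ultimately have "W k u - W k s = rate k s * (u - s)" by (rule has_integral_unique)
    then show "W k u = W k s + rate k s * (u - s)" by simp
  qed
  show ?thesis by (rule exI[of _ \<delta>], rule conjI[OF \<delta>(1) linear])
qed

lemma service_ratio_while_backlogged:
  assumes k: "k0 < K" "k1 < K" and uv: "0 \<le> u" "u \<le> v"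
    and backlog: "\<And>s. u \<le> s \<Longrightarrow> s < v \<Longrightarrow> W k0 s < A k0 s"
  shows "(W k1 v - W k1 u) * \<phi> k0 \<le> (W k0 v - W k0 u) * \<phi> k1"
proof -
  have "((\<lambda>x. if x = v then 0 else rate k1 x * \<phi> k0)
      has_integral ((W k1 v - W k1 u) * \<phi> k0)) {u..v}"
    by (rule has_integral_spike_finite[of "{v}", OF _ _
          has_integral_mult_left[OF rate_has_integral_increment[OF k(2) uv]]]) auto
  moreover have "((\<lambda>x. if x = v then 0 else rate k0 x * \<phi> k1)
      has_integral ((W k0 v - W k0 u) * \<phi> k1)) {u..v}"
    by (rule has_integral_spike_finite[of "{v}", OF _ _
          has_integral_mult_left[OF rate_has_integral_increment[OF k(1) uv]]]) auto
  ultimately show ?thesis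
    by (rule has_integral_le) (use rate_weighted_le k backlog in auto)
qed

lemma first_passage:
  assumes k: "k < K" and u: "0 \<le> u" "W k u < c" and t: "u \<le> t" "c \<le> W k t"
  shows "\<exists>T. u \<le> T \<and> T \<le> t \<and> W k T = c \<and> (\<forall>s. u \<le> s \<and> s < T \<longrightarrow> W k s < c)"
proof -
  define Z where "Z = {u..t} \<inter> W k -` {c}"
  have "Z \<noteq> {}" using service_ivt[OF k u(1) t(1) less_imp_le[OF u(2)] t(2)] unfolding Z_def by auto
  moreover have "closed Z" unfolding Z_def using service_continuous[OF k] u(1)
    by (auto intro!: continuous_closed_preimage elim: continuous_on_subset)
  moreover have bdd: "bdd_below Z" unfolding Z_def by (auto intro: bdd_belowI[of _ u])
  ultimately have "Inf Z \<in> Z" by (intro closed_contains_Inf)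
  then have T: "u \<le> Inf Z" "Inf Z \<le> t" "W k (Inf Z) = c" unfolding Z_def by auto
  have "W k s < c" if s: "u \<le> s" "s < Inf Z" for s
  proof (rule ccontr)
    assume "\<not> W k s < c"
    then obtain x where "u \<le> x" "x \<le> s" "W k x = c"
      using service_ivt[OF k u(1) s(1) less_imp_le[OF u(2)]] by auto
    then have "Inf Z \<le> x" using cInf_lower[OF _ bdd, of x] s T unfolding Z_def by auto
    then show False using \<open>x \<le> s\<close> s by simp
  qed
  then show ?thesis using T by blast
qed

lemma gps_finish_gt:
  assumes k: "k < K" and reached: "0 \<le> t" "real (Suc i) * L \<le> W k t"
    and T: "0 \<le> T" "W k T < real (Suc i) * L"
  shows "T < gps_finish W L (k, i)"
proof -
  let ?Z = "{t. 0 \<le> t \<and> real (Suc i) * L \<le> W k t}"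
  have "?Z = {0..} \<inter> W k -` {real (Suc i) * L..}" by auto
  then have "closed ?Z"
    using service_continuous[OF k] by (auto intro!: continuous_closed_preimage)
  then have Z: "Inf ?Z \<in> ?Z"
    using reached by (intro closed_contains_Inf) (auto intro: bdd_belowI[of _ 0])
  have "T < Inf ?Z"
  proof (rule ccontr)
    assume "\<not> T < Inf ?Z"
    then have "W k (Inf ?Z) \<le> W k T" using Z service_mono[OF k] by simp
    then show False using Z T(2) by simp
  qed
  then show ?thesis unfolding gps_finish_def by simp
qed

lemma service_reaches_backlog:
  assumes \<tau>: "0 \<le> \<tau>" and no_arrivals: "\<And>t k. \<tau> \<le> t \<Longrightarrow> k < K \<Longrightarrow> A k t = A k \<tau>"
    and k: "k < K" and c: "c \<le> A k \<tau>"
  shows "\<exists>t\<ge>\<tau>. c \<le> W k t"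
proof (rule ccontr)
  assume never: "\<not> (\<exists>t\<ge>\<tau>. c \<le> W k t)"
  (* k stays backlogged, so the servers work at full rate for longer than the total
     backlog allows *)
  define B where "B = (\<Sum>j<K. A j \<tau>)"
  define t where "t = \<tau> + B / R + 1"
  have "0 \<le> B" unfolding B_def using arrivals_nonneg \<tau> by (auto intro: sum_nonneg)
  then have t: "\<tau> \<le> t" unfolding t_def using capacity_pos by auto
  have "R * (t - \<tau>) \<le> (\<Sum>j<K. W j t - W j \<tau>)"
  proof (rule total_service_increment_busy[OF \<tau> t])
    fix s assume s: "\<tau> \<le> s" "s \<le> t"
    then have "W k s < c" using never by auto
    then have "W k s < A k s" using c no_arrivals[OF s(1) k] by simp
    then show "backlogged s \<noteq> {}" using k by blast
  qed
  also have "\<dots> \<le> B" unfolding B_def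
    using service_le_arrivals[of _ t] service_nonneg[OF _ \<tau>] no_arrivals[OF t] t \<tau>
    by (intro sum_mono) force
  finally have "R * (t - \<tau>) \<le> B" .
  moreover have "R * (B / R) = B" using capacity_nonzero by simp
  then have "R * (t - \<tau>) = B + R" unfolding t_def by (simp add: algebra_simps)
  ultimately show False using capacity_pos by linarith
qed

end

lemma gps_finish_le:
  assumes "0 \<le> T" "real (Suc (snd p)) * L \<le> W (fst p) T"
  shows "gps_finish W L p \<le> T"
  unfolding gps_finish_def by (rule cInf_lower) (use assms in \<open>auto intro: bdd_belowI[of _ 0]\<close>)

text \<open>At the first time two solutions would differ they still agree by continuity, hence so do
  their rates, and both are linear just after it.\<close>

lemma gps_service_causal:
  assumes G: "gps_system K \<phi> N r A W" and G': "gps_system K \<phi> N r A' W'" and \<tau>: "0 \<le> \<tau>"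
    and same_arrivals: "\<And>k t. k < K \<Longrightarrow> 0 \<le> t \<Longrightarrow> t \<le> \<tau> \<Longrightarrow> A' k t = A k t"
    and k: "k < K" and t: "0 \<le> t" "t \<le> \<tau>"
  shows "W' k t = W k t"
proof (rule ccontr)
  interpret G: gps_system K \<phi> N r A W by (rule G)
  interpret G': gps_system K \<phi> N r A' W' by (rule G')
  assume "W' k t \<noteq> W k t"
  define Z where "Z = {t. 0 \<le> t \<and> t \<le> \<tau> \<and> (\<exists>k<K. W' k t \<noteq> W k t)}"
  define s0 where "s0 = Inf Z"
  have "t \<in> Z" using k t \<open>W' k t \<noteq> W k t\<close> unfolding Z_def by auto
  have bdd: "bdd_below Z" unfolding Z_def by (rule bdd_belowI[of _ 0]) simp
  have s0: "0 \<le> s0" "s0 \<le> \<tau>"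
  proof -
    show "0 \<le> s0" unfolding s0_def using \<open>t \<in> Z\<close> by (intro cInf_greatest) (auto simp: Z_def)
    show "s0 \<le> \<tau>" using cInf_lower[OF \<open>t \<in> Z\<close> bdd] t unfolding s0_def by simp
  qed
  have before: "W' j x = W j x" if "j < K" "0 \<le> x" "x < s0" for j x
  proof (rule ccontr)
    assume "W' j x \<noteq> W j x"
    then have "x \<in> Z" using that s0 unfolding Z_def by auto
    then show False using cInf_lower[OF _ bdd, of x] that(3) unfolding s0_def by simp
  qed
  have at: "W' j s0 = W j s0" if j: "j < K" for j
  proof (cases "s0 = 0")
    case True
    then show ?thesis using G.service_zero G'.service_zero j by simp
  next
    case False
    then have "continuous_on (closure {0..<s0}) (\<lambda>x. W' j x - W j x)"
      using G.service_continuous[OF j] G'.service_continuous[OF j] s0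
      by (auto intro!: continuous_on_diff elim: continuous_on_subset)
    then show ?thesis
      using continuous_constant_on_closure[of "{0..<s0}" "\<lambda>x. W' j x - W j x" 0 s0]
        before j s0 False
      by auto
  qed
  have same_rate: "G'.rate j s0 = G.rate j s0" if "j < K" for j
  proof -
    have "G'.backlogged s0 = G.backlogged s0" using at same_arrivals s0 by auto
    then show ?thesis unfolding gps_rate_def using at[OF that] same_arrivals[OF that s0] by simp
  qed
  from G.service_locally_linear[OF s0(1)] obtain \<delta> where \<delta>: "\<delta> > 0 \<and>
      (\<forall>u. s0 \<le> u \<and> u < s0 + \<delta> \<longrightarrow> (\<forall>k<K. W k u = W k s0 + G.rate k s0 * (u - s0)))" ..
  from G'.service_locally_linear[OF s0(1)] obtain \<delta>' where \<delta>': "\<delta>' > 0 \<and>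
      (\<forall>u. s0 \<le> u \<and> u < s0 + \<delta>' \<longrightarrow> (\<forall>k<K. W' k u = W' k s0 + G'.rate k s0 * (u - s0)))" ..
  have "s0 + min \<delta> \<delta>' \<le> z" if z: "z \<in> Z" for z
  proof (rule ccontr)
    assume "\<not> s0 + min \<delta> \<delta>' \<le> z"
    moreover have "s0 \<le> z" using z cInf_lower[OF _ bdd] unfolding s0_def by auto
    moreover obtain j where "j < K" "W' j z \<noteq> W j z" using z unfolding Z_def by auto
    ultimately show False
      using \<delta>[THEN conjunct2, rule_format, of z] \<delta>'[THEN conjunct2, rule_format, of z] at same_rate
      by force
  qed
  then have "s0 + min \<delta> \<delta>' \<le> s0"
    unfolding s0_def using \<open>t \<in> Z\<close> by (intro cInf_greatest) auto
  then show False using \<delta>[THEN conjunct1] \<delta>'[THEN conjunct1] by simp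
qed

text \<open>Order preservation (Parekh and Gallager).  Weighted fairness is used twice: in the real
  system on [\<tau>, T], where k0 is backlogged, and in the frozen system until k1 reaches c1.\<close>

lemma frozen_gps_preserves_order:
  assumes G: "gps_system K \<phi> N r A W" and H: "gps_system K \<phi> N r (\<lambda>k t. A k (min t \<tau>)) W'"
    and \<tau>: "0 \<le> \<tau>" and agree: "\<And>k. k < K \<Longrightarrow> W' k \<tau> = W k \<tau>"
    and k: "k0 < K" "k1 < K" and covered: "c0 \<le> A k0 \<tau>" "c1 \<le> A k1 \<tau>"
    and T: "\<tau> \<le> T" "W k0 T < c0" "c1 \<le> W k1 T"
  shows "\<exists>T'. \<tau> \<le> T' \<and> c1 \<le> W' k1 T' \<and> W' k0 T' < c0"
proof -
  interpret G: gps_system K \<phi> N r A W by (rule G)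
  interpret H: gps_system K \<phi> N r "\<lambda>k t. A k (min t \<tau>)" W' by (rule H)
  have "W k0 \<tau> < c0" using G.service_mono[OF k(1) \<tau> T(1)] T(2) by simp
  show ?thesis
  proof (cases "c1 \<le> W k1 \<tau>")
    case True
    then show ?thesis using \<open>W k0 \<tau> < c0\<close> agree k by (intro exI[of _ \<tau>]) auto
  next
    case False
    have ratio_G: "(W k1 T - W k1 \<tau>) * \<phi> k0 \<le> (W k0 T - W k0 \<tau>) * \<phi> k1"
    proof (rule G.service_ratio_while_backlogged[OF k \<tau> T(1)])
      fix s assume s: "\<tau> \<le> s" "s < T"
      have "W k0 s < c0" using G.service_mono[OF k(1), of s T] \<tau> s T(2) by simp
      also have "c0 \<le> A k0 s" using covered(1) G.arrivals_mono[OF k(1) \<tau> s(1)] by simp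
      finally show "W k0 s < A k0 s" .
    qed
    obtain t1 where "\<tau> \<le> t1" "c1 \<le> W' k1 t1"
      using H.service_reaches_backlog[OF \<tau> _ k(2)] covered(2) by auto
    then obtain T' where T': "\<tau> \<le> T'" "W' k1 T' = c1" "\<And>s. \<tau> \<le> s \<Longrightarrow> s < T' \<Longrightarrow> W' k1 s < c1"
      using H.first_passage[OF k(2) \<tau>] False agree[OF k(2)] by (metis linorder_not_le)
    have ratio_H: "(W' k0 T' - W' k0 \<tau>) * \<phi> k1 \<le> (W' k1 T' - W' k1 \<tau>) * \<phi> k0"
    proof (rule H.service_ratio_while_backlogged[OF k(2,1) \<tau> T'(1)])
      fix s assume s: "\<tau> \<le> s" "s < T'"
      then have "W' k1 s < c1" by (rule T'(3))
      then show "W' k1 s < A k1 (min s \<tau>)" using covered(2) s(1) by (simp add: min_absorb2)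
    qed
    have "0 < \<phi> k0" "0 < \<phi> k1" using G.weight_pos k by auto
    have "(W' k0 T' - W k0 \<tau>) * \<phi> k1 \<le> (c1 - W k1 \<tau>) * \<phi> k0"
      using ratio_H T'(2) agree k by simp
    also have "\<dots> \<le> (W k1 T - W k1 \<tau>) * \<phi> k0"
      using T(3) \<open>0 < \<phi> k0\<close> by (intro mult_right_mono) auto
    also have "\<dots> \<le> (W k0 T - W k0 \<tau>) * \<phi> k1" by (rule ratio_G)
    also have "\<dots> < (c0 - W k0 \<tau>) * \<phi> k1"
      using T(2) \<open>0 < \<phi> k1\<close> by (intro mult_strict_right_mono) auto
    finally have "W' k0 T' < c0" using \<open>0 < \<phi> k1\<close> by (simp add: mult_less_cancel_right)
    then show ?thesis using T' by (intro exI[of _ T']) simp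
  qed
qed

section \<open>The MPGPS schedule\<close>

locale mpgps_model =
  fixes K N M :: nat and \<phi> :: "nat \<Rightarrow> real" and r L :: real
    and P :: "(nat \<times> nat) set" and a :: "nat \<times> nat \<Rightarrow> real"
    and W :: "nat \<Rightarrow> real \<Rightarrow> real" and Wt :: "real \<Rightarrow> nat \<Rightarrow> real \<Rightarrow> real"
    and s :: "nat \<Rightarrow> real" and S :: "nat \<Rightarrow> (nat \<times> nat) set" and nb :: enat
  assumes phi_pos: "\<And>k. k < K \<Longrightarrow> \<phi> k > 0"
    and N_pos: "N \<ge> 1" and r_pos: "r > 0" and L_pos: "L > 0" and M_pos: "M \<ge> 1"
    and P_users: "\<And>k i. (k, i) \<in> P \<Longrightarrow> k < K"
    and P_closed: "\<And>k i j. (k, i) \<in> P \<Longrightarrow> j < i \<Longrightarrow> (k, j) \<in> P"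
    and arr_nonneg: "\<And>p. p \<in> P \<Longrightarrow> a p \<ge> 0"
    and arr_mono: "\<And>k i j. (k, i) \<in> P \<Longrightarrow> j \<le> i \<Longrightarrow> a (k, j) \<le> a (k, i)"
    and loc_finite: "\<And>T. finite {p \<in> P. a p \<le> T}"
    and gps: "is_gps K \<phi> N r (\<lambda>k t. cum_arr P a L k t) W"
    and gps_trunc: "\<And>\<tau>. \<tau> \<ge> 0 \<Longrightarrow> is_gps K \<phi> N r (\<lambda>k t. cum_arr P a L k (min t \<tau>)) (Wt \<tau>)"
    and mpgps: "is_mpgps P a L N r M Wt s S nb"
begin

abbreviation "R \<equiv> real N * r"
abbreviation "arrived k t \<equiv> {i. (k, i) \<in> P \<and> a (k, i) \<le> t}"
abbreviation "finished_by q T \<equiv> real (Suc (snd q)) * L \<le> W (fst q) T"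
abbreviation "e h \<equiv> batch_end L N r s S h"
abbreviation "max_delay \<equiv> (2 * real M - 1) * L / R"
abbreviation "served_in h t \<equiv> min L (max 0 ((t - s h) * R / real (card (S h))))"

lemma capacity_pos: "R > 0"
  using N_pos r_pos by simp

lemma finite_arrived: "finite (arrived k t)"
proof -
  have "arrived k t \<subseteq> snd ` {p \<in> P. a p \<le> t}" by force
  then show ?thesis by (rule finite_subset) (rule finite_imageI[OF loc_finite])
qed

lemma arrived_eq_lessThan: "arrived k t = {..<card (arrived k t)}"
proof (rule finite_down_closed_eq_lessThan[OF finite_arrived])
  fix i j assume "i \<in> arrived k t" "j < i"
  then show "j \<in> arrived k t" using P_closed[of k i j] arr_mono[of k i j] by auto
qed

lemma less_card_arrived_iff: "i < card (arrived k t) \<longleftrightarrow> (k, i) \<in> P \<and> a (k, i) \<le> t"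
  using arg_cong[OF arrived_eq_lessThan, of "\<lambda>A. i \<in> A" k t] by simp

lemma arrived_iff_cum_arr_ge:
  "(k, i) \<in> P \<and> a (k, i) \<le> t \<longleftrightarrow> real (Suc i) * L \<le> cum_arr P a L k t"
proof -
  have "(k, i) \<in> P \<and> a (k, i) \<le> t \<longleftrightarrow> i < card (arrived k t)"
    by (rule less_card_arrived_iff[symmetric])
  also have "\<dots> \<longleftrightarrow> real (Suc i) \<le> real (card (arrived k t))"
    by (simp only: of_nat_le_iff Suc_le_eq)
  also have "\<dots> \<longleftrightarrow> real (Suc i) * L \<le> cum_arr P a L k t"
    unfolding cum_arr_def using L_pos by (simp add: mult.commute)
  finally show ?thesis .
qed

lemma cum_arr_mono:
  assumes "t1 \<le> t2"
  shows "cum_arr P a L k t1 \<le> cum_arr P a L k t2"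
proof -
  have "card (arrived k t1) \<le> card (arrived k t2)"
    using assms by (intro card_mono[OF finite_arrived]) auto
  then show ?thesis unfolding cum_arr_def using L_pos by simp
qed

lemma cum_arr_right_constant:
  obtains \<delta> where "\<delta> > 0" "\<And>u k. t \<le> u \<Longrightarrow> u < t + \<delta> \<Longrightarrow> cum_arr P a L k u = cum_arr P a L k t"
proof
  define F where "F = (\<lambda>p. a p - t) ` {p \<in> P. a p \<le> t + 1 \<and> t < a p}"
  have fin: "finite (insert 1 F)" unfolding F_def
    by (auto intro: finite_subset[OF _ loc_finite[of "t + 1"]])
  show "Min (insert 1 F) > 0" using fin by (subst Min_gr_iff) (auto simp: F_def)
  have \<delta>: "Min (insert 1 F) \<le> 1"
    "\<And>p. p \<in> P \<Longrightarrow> a p \<le> t + 1 \<Longrightarrow> t < a p \<Longrightarrow> Min (insert 1 F) \<le> a p - t"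
    using fin by (auto simp: F_def intro!: Min_le)
  fix u k assume u: "t \<le> u" "u < t + Min (insert 1 F)"
  have "i \<in> arrived k u \<longleftrightarrow> i \<in> arrived k t" for i
  proof
    assume i: "i \<in> arrived k u"
    show "i \<in> arrived k t"
    proof (rule ccontr)
      assume "i \<notin> arrived k t"
      then have "Min (insert 1 F) \<le> a (k, i) - t" using i u \<delta> by (intro \<delta>(2)) auto
      then show False using i u by auto
    qed
  qed (use u in auto)
  then have "arrived k u = arrived k t" by blast
  then show "cum_arr P a L k u = cum_arr P a L k t" unfolding cum_arr_def by (simp only:)
qed

lemma gps_system_W: "gps_system K \<phi> N r (\<lambda>k t. cum_arr P a L k t) W"
proof
  fix t :: real
  obtain \<delta> where \<delta>: "\<delta> > 0" "\<And>u k. t \<le> u \<Longrightarrow> u < t + \<delta> \<Longrightarrow> cum_arr P a L k u = cum_arr P a L k t"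
    using cum_arr_right_constant[of t] by blast
  show "\<exists>\<delta>>0. \<forall>u. t \<le> u \<and> u < t + \<delta> \<longrightarrow> (\<forall>k<K. cum_arr P a L k u = cum_arr P a L k t)"
  proof (intro exI[of _ \<delta>] conjI allI impI)
    fix u k assume "t \<le> u \<and> u < t + \<delta>"
    then show "cum_arr P a L k u = cum_arr P a L k t" by (intro \<delta>(2)) auto
  qed (rule \<delta>(1))
next
  fix k :: nat and t1 t2 :: real
  show "t1 \<le> t2 \<Longrightarrow> cum_arr P a L k t1 \<le> cum_arr P a L k t2" by (rule cum_arr_mono)
  show "0 \<le> cum_arr P a L k t1" unfolding cum_arr_def using L_pos by simp
qed (use phi_pos capacity_pos gps in auto)

lemma gps_system_Wt:
  assumes "0 \<le> \<tau>"
  shows "gps_system K \<phi> N r (\<lambda>k t. cum_arr P a L k (min t \<tau>)) (Wt \<tau>)"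
proof
  fix t :: real
  obtain \<delta> where \<delta>: "\<delta> > 0"
    "\<And>u k. min t \<tau> \<le> u \<Longrightarrow> u < min t \<tau> + \<delta> \<Longrightarrow> cum_arr P a L k u = cum_arr P a L k (min t \<tau>)"
    using cum_arr_right_constant[of "min t \<tau>"] by blast
  show "\<exists>\<delta>>0. \<forall>u. t \<le> u \<and> u < t + \<delta> \<longrightarrow>
      (\<forall>k<K. cum_arr P a L k (min u \<tau>) = cum_arr P a L k (min t \<tau>))"
  proof (intro exI[of _ \<delta>] conjI allI impI)
    fix u k assume "t \<le> u \<and> u < t + \<delta>"
    then show "cum_arr P a L k (min u \<tau>) = cum_arr P a L k (min t \<tau>)"
      by (intro \<delta>(2)) (auto simp: min_def)
  qed (rule \<delta>(1))
next
  fix k :: nat and t1 t2 :: real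
  show "t1 \<le> t2 \<Longrightarrow> cum_arr P a L k (min t1 \<tau>) \<le> cum_arr P a L k (min t2 \<tau>)"
    by (intro cum_arr_mono) simp
  show "0 \<le> cum_arr P a L k (min t1 \<tau>)" unfolding cum_arr_def using L_pos by simp
qed (use phi_pos capacity_pos gps_trunc assms in auto)

sublocale G: gps_system K \<phi> N r "\<lambda>k t. cum_arr P a L k t" W
  by (rule gps_system_W)

lemma Wt_eq_W: "0 \<le> \<tau> \<Longrightarrow> k < K \<Longrightarrow> 0 \<le> t \<Longrightarrow> t \<le> \<tau> \<Longrightarrow> Wt \<tau> k t = W k t"
  by (rule gps_service_causal[OF gps_system_W gps_system_Wt]) auto

lemma arrived_if_finished:
  assumes "fst q < K" "0 \<le> T" "finished_by q T"
  shows "q \<in> P \<and> a q \<le> T"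
  using arrived_iff_cum_arr_ge[of "fst q" "snd q" T] G.service_le_arrivals[of "fst q" T] assms
  by simp

lemma frozen_gps_finish_order:
  assumes \<tau>: "0 \<le> \<tau>"
    and arrived: "(k0, i0) \<in> P" "a (k0, i0) \<le> \<tau>" "(k1, i1) \<in> P" "a (k1, i1) \<le> \<tau>"
    and T: "0 \<le> T" "real (Suc i1) * L \<le> W k1 T" "W k0 T < real (Suc i0) * L"
  shows "gps_finish (Wt \<tau>) L (k1, i1) < gps_finish (Wt \<tau>) L (k0, i0)"
proof -
  interpret H: gps_system K \<phi> N r "\<lambda>k t. cum_arr P a L k (min t \<tau>)" "Wt \<tau>"
    by (rule gps_system_Wt[OF \<tau>])
  have k: "k0 < K" "k1 < K" using arrived P_users by auto
  have covered: "real (Suc i0) * L \<le> cum_arr P a L k0 \<tau>" "real (Suc i1) * L \<le> cum_arr P a L k1 \<tau>"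
    using arrived arrived_iff_cum_arr_ge[of k0 i0 \<tau>] arrived_iff_cum_arr_ge[of k1 i1 \<tau>] by simp_all
  obtain T' where T': "0 \<le> T'" "real (Suc i1) * L \<le> Wt \<tau> k1 T'" "Wt \<tau> k0 T' < real (Suc i0) * L"
  proof (cases "T \<le> \<tau>")
    case True
    have "Wt \<tau> k0 T = W k0 T" "Wt \<tau> k1 T = W k1 T" using Wt_eq_W[OF \<tau> _ T(1) True] k by auto
    then show ?thesis using that[OF T(1)] T(2,3) by simp
  next
    case False
    obtain T' where "\<tau> \<le> T'" "real (Suc i1) * L \<le> Wt \<tau> k1 T'" "Wt \<tau> k0 T' < real (Suc i0) * L"
      using frozen_gps_preserves_order[OF gps_system_W gps_system_Wt[OF \<tau>] \<tau>
          Wt_eq_W[OF \<tau> _ \<tau> order_refl] k covered _ T(3) T(2)] False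
      by auto
    then show ?thesis using that[of T'] \<tau> by force
  qed
  have "\<exists>t\<ge>\<tau>. real (Suc i0) * L \<le> Wt \<tau> k0 t"
    by (rule H.service_reaches_backlog[OF \<tau> _ k(1)]) (use covered(1) in simp_all)
  then obtain t where "\<tau> \<le> t" "real (Suc i0) * L \<le> Wt \<tau> k0 t" by blast
  then have "T' < gps_finish (Wt \<tau>) L (k0, i0)"
    using \<tau> by (intro H.gps_finish_gt[OF k(1) _ _ T'(1,3)]) auto
  moreover have "gps_finish (Wt \<tau>) L (k1, i1) \<le> T'" by (rule gps_finish_le) (use T' in simp_all)
  ultimately show ?thesis by simp
qed

lemma batch_index_le: "enat h < nb \<Longrightarrow> j \<le> h \<Longrightarrow> enat j < nb"
  by (meson enat_ord_simps(1) le_less_trans)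

lemma batch_queued:
  assumes "enat h < nb" "q \<in> S h"
  shows "q \<in> P" "a q \<le> s h" "q \<notin> served_before S h"
  using mpgps assms unfolding is_mpgps_def queued_at_def by blast+

lemma batch_card:
  assumes "enat h < nb"
  shows "finite (S h)" "1 \<le> card (S h)" "card (S h) \<le> M"
proof -
  show "finite (S h)"
    by (rule finite_subset[OF _ loc_finite[of "s h"]]) (use batch_queued[OF assms] in auto)
  moreover have "S h \<noteq> {}" using mpgps assms unfolding is_mpgps_def by blast
  ultimately show "1 \<le> card (S h)" by (simp add: Suc_le_eq card_gt_0_iff)
  show "card (S h) \<le> M" using mpgps assms unfolding is_mpgps_def by simp
qed

lemma batch_first_to_finish:
  assumes "enat h < nb" "p \<in> S h" "q \<in> queued_at P a s S h - S h"
  shows "gps_finish (Wt (s h)) L p \<le> gps_finish (Wt (s h)) L q"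
  using mpgps assms unfolding is_mpgps_def by blast

lemma batch_start:
  assumes "enat h < nb"
  shows "s h = max (if h = 0 then 0 else e (h - 1)) (Inf (a ` (P - served_before S h)))"
  using mpgps assms unfolding is_mpgps_def by blast

lemma batches_disjoint:
  assumes "enat i < nb" "enat j < nb" "i \<noteq> j"
  shows "S i \<inter> S j = {}"
  using batch_queued(3)[OF assms(1)] batch_queued(3)[OF assms(2)] assms(3)
  unfolding served_before_def by (metis UN_I disjoint_iff lessThan_iff linorder_neqE_nat)

lemma batch_start_lower: "enat h < nb \<Longrightarrow> real h * (L / R) \<le> s h"
proof (induction h)
  case 0
  then show ?case using batch_start[OF 0] by simp
next
  case (Suc h)
  have h: "enat h < nb" using batch_index_le[OF Suc.prems] by simp
  have "L / R \<le> real (card (S h)) * L / R"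
    using batch_card(2)[OF h] L_pos capacity_pos by (simp add: divide_right_mono)
  moreover have "e h \<le> s (Suc h)" using batch_start[OF Suc.prems] by simp
  moreover have "e h = s h + real (card (S h)) * L / R" by (simp add: batch_end_def)
  moreover have "real (Suc h) * (L / R) = real h * (L / R) + L / R"
    by (simp add: distrib_right add_divide_distrib)
  ultimately show ?case using Suc.IH[OF h] by linarith
qed

lemma batch_start_nonneg: "enat h < nb \<Longrightarrow> 0 \<le> s h"
  using batch_start_lower[of h] L_pos capacity_pos by (meson divide_nonneg_pos less_imp_le
    mult_nonneg_nonneg of_nat_0_le_iff order_trans)

lemma all_batched_if_finite: "nb = enat n \<Longrightarrow> served_before S n = P"
  using mpgps unfolding is_mpgps_def by blast

text \<open>By the selection rule p finishes no later than q in the GPS system frozen at s h;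
  order preservation transfers this to the real GPS system.\<close>

lemma selected_finishes_first:
  assumes h: "enat h < nb" and p: "p \<in> S h" and q: "q \<in> queued_at P a s S h - S h"
    and T: "0 \<le> T" "finished_by q T"
  shows "finished_by p T"
proof (rule ccontr)
  assume "\<not> finished_by p T"
  moreover have "p \<in> P" "a p \<le> s h" using batch_queued[OF h p] by auto
  moreover have "q \<in> P" "a q \<le> s h" using q unfolding queued_at_def by auto
  ultimately have "gps_finish (Wt (s h)) L q < gps_finish (Wt (s h)) L p"
    using frozen_gps_finish_order[OF batch_start_nonneg[OF h], of "fst p" "snd p" "fst q" "snd q"] T
    by simp
  then show False using batch_first_to_finish[OF h p q] by linarith
qed

lemma arrival_after_unfinished_batch:
  assumes j: "enat j < nb" "c < j" and q: "q \<in> S j" "finished_by q T"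
    and p: "p \<in> S c" "\<not> finished_by p T" and T: "0 \<le> T"
  shows "s c < a q"
proof (rule ccontr)
  assume "\<not> s c < a q"
  have c: "enat c < nb" using batch_index_le[OF j(1)] j(2) by simp
  have "q \<notin> S i" if "i \<le> c" for i
    using batches_disjoint[of i j] batch_index_le[OF j(1), of i] j that q(1) by auto
  then have "q \<notin> served_before S c \<union> S c" unfolding served_before_def by auto
  then have "q \<in> queued_at P a s S c - S c"
    using batch_queued(1)[OF j(1) q(1)] \<open>\<not> s c < a q\<close> unfolding queued_at_def by auto
  then show False using selected_finishes_first[OF c p(1) _ T q(2)] p(2) by blast
qed

lemma arrival_after_idle_start:
  assumes c: "enat c < nb" "c = 0 \<or> e (c - 1) < s c" and j: "enat j < nb" "c \<le> j"
    and q: "q \<in> S j"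
  shows "s c \<le> a q"
proof -
  have "q \<notin> S i" if "i < c" for i
    using batches_disjoint[of i j] batch_index_le[OF j(1), of i] j that q by auto
  then have "q \<notin> served_before S c" unfolding served_before_def by auto
  then have "Inf (a ` (P - served_before S c)) \<le> a q"
    using batch_queued(1)[OF j(1) q] arr_nonneg
    by (intro cInf_lower) (auto intro: bdd_belowI[of _ 0])
  then show ?thesis
    using batch_start[OF c(1)] c(2) arr_nonneg[OF batch_queued(1)[OF j(1) q]]
    by (auto simp: max_def)
qed

section \<open>Delay and service lag\<close>

lemma gps_work_bound:
  assumes u: "0 \<le> u" "u \<le> T" and X: "X \<subseteq> P" "finite X"
    and finished: "\<And>q. q \<in> X \<Longrightarrow> finished_by q T"
    and fresh: "\<And>q. q \<in> X \<Longrightarrow> n (fst q) \<le> snd q"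
    and before: "\<And>k. k < K \<Longrightarrow> W k u \<le> real (n k) * L"
  shows "real (card X) * L \<le> R * (T - u)"
proof -
  define Y where "Y k = {i. (k, i) \<in> X}" for k
  have finite_Y: "finite (Y k)" for k
    using finite_imageI[OF X(2), of snd] by (rule finite_subset[rotated]) (force simp: Y_def)
  have "X \<subseteq> (\<Union>k<K. Pair k ` Y k)" using X(1) P_users unfolding Y_def by force
  then have "card X \<le> card (\<Union>k<K. Pair k ` Y k)" by (rule card_mono[rotated]) (simp add: finite_Y)
  also have "\<dots> \<le> (\<Sum>k<K. card (Pair k ` Y k))" by (rule card_UN_le) simp
  also have "\<dots> = (\<Sum>k<K. card (Y k))" by (simp add: card_image inj_on_def)
  finally have "real (card X) * L \<le> (\<Sum>k<K. real (card (Y k)) * L)"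
    using L_pos by (simp flip: of_nat_sum sum_distrib_right)
  also have "\<dots> \<le> (\<Sum>k<K. W k T - W k u)"
  proof (rule sum_mono)
    fix k assume "k \<in> {..<K}"
    then have k: "k < K" by simp
    show "real (card (Y k)) * L \<le> W k T - W k u"
    proof (rule card_levels_crossed_le[OF finite_Y _ before[OF k] G.service_mono[OF k u] L_pos])
      fix i assume "i \<in> Y k"
      then show "n k \<le> i \<and> real (Suc i) * L \<le> W k T" using finished fresh unfolding Y_def by force
    qed
  qed
  also have "\<dots> \<le> R * (T - u)" by (rule G.total_service_increment_le[OF u])
  finally show ?thesis .
qed

lemma gps_work_bound_after:
  assumes u: "0 \<le> u" and T: "0 \<le> T" and X: "X \<subseteq> P" "finite X" "X \<noteq> {}"
    and late: "\<And>q. q \<in> X \<Longrightarrow> finished_by q T \<and> u < a q"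
  shows "real (card X) * L \<le> R * (T - u)"
proof -
  obtain q where q: "q \<in> X" using X(3) by blast
  then have "fst q < K" using X(1) P_users by (metis prod.collapse subsetD)
  then have "u \<le> T" using arrived_if_finished[OF _ T] late[OF q] by force
  show ?thesis
  proof (rule gps_work_bound[OF u \<open>u \<le> T\<close> X(1,2), of "\<lambda>k. card (arrived k u)"])
    fix q assume "q \<in> X"
    then show "finished_by q T" using late by blast
    have "u < a q" using late[OF \<open>q \<in> X\<close>] by blast
    then have "\<not> snd q < card (arrived (fst q) u)"
      unfolding less_card_arrived_iff by simp
    then show "card (arrived (fst q) u) \<le> snd q" by simp
  next
    fix k assume "k < K"
    then show "W k u \<le> real (card (arrived k u)) * L"
      using G.service_le_arrivals[OF _ u] unfolding cum_arr_def by (simp add: mult.commute)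
  qed
qed

text \<open>Obtained from gps_work_bound_after by letting the starting time tend to u from below.\<close>

lemma gps_work_bound_from:
  assumes u: "0 \<le> u" and T: "0 \<le> T" and X: "X \<subseteq> P" "finite X" "X \<noteq> {}"
    and late: "\<And>q. q \<in> X \<Longrightarrow> finished_by q T \<and> u \<le> a q"
  shows "real (card X) * L \<le> R * (T - u)"
proof (rule field_le_epsilon)
  fix \<epsilon> :: real assume "0 < \<epsilon>"
  show "real (card X) * L \<le> R * (T - u) + \<epsilon>"
  proof (cases "u < \<epsilon> / R")
    case True
    have "real (card X) * L \<le> R * (T - 0)"
      by (rule gps_work_bound[OF order_refl T X(1,2), of "\<lambda>_. 0"]) (use late G.service_zero in auto)
    moreover have "R * u < \<epsilon>" using True capacity_pos by (simp add: field_simps)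
    ultimately show ?thesis unfolding right_diff_distrib by simp
  next
    case False
    have "0 < \<epsilon> / R" using \<open>0 < \<epsilon>\<close> capacity_pos by simp
    have "real (card X) * L \<le> R * (T - (u - \<epsilon> / R))"
    proof (rule gps_work_bound_after[OF _ T X])
      show "0 \<le> u - \<epsilon> / R" using False by simp
      fix q assume "q \<in> X"
      then have "finished_by q T" "u \<le> a q" using late by auto
      then show "finished_by q T \<and> u - \<epsilon> / R < a q" using \<open>0 < \<epsilon> / R\<close> by simp
    qed
    moreover have "R * (\<epsilon> / R) = \<epsilon>"
      by (metis G.capacity_nonzero nonzero_mult_div_cancel_left times_divide_eq_right)
    moreover have "R * (T - (u - \<epsilon> / R)) = R * (T - u) + R * (\<epsilon> / R)"
      by (simp add: algebra_simps)
    ultimately show ?thesis by linarith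
  qed
qed

text \<open>If p were never selected, then from some batch on p would always be queued, so every
  later batch would consist of packets that GPS finishes by T: infinitely many disjoint
  nonempty subsets of the finite set of packets arriving by T.\<close>

lemma packet_batched:
  assumes p: "p \<in> P" "0 \<le> T" "finished_by p T"
  shows "\<exists>h. enat h < nb \<and> p \<in> S h"
proof (rule ccontr)
  assume unbatched: "\<not> (\<exists>h. enat h < nb \<and> p \<in> S h)"
  show False
  proof (cases nb)
    case (enat n)
    then show False
      using all_batched_if_finite[OF enat] p(1) unbatched unfolding served_before_def by auto
  next
    case infinity
    obtain h0 where h0: "a p / (L / R) \<le> real h0" using real_arch_simple by blast
    have "S h \<noteq> {} \<and> S h \<subseteq> {q \<in> P. a q \<le> T}" if "h \<in> {h0..}" for h
    proof -
      have h: "enat h < nb" using infinity by simp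
      have "a p \<le> real h0 * (L / R)" using h0 L_pos capacity_pos by (simp add: field_simps)
      also have "\<dots> \<le> real h * (L / R)"
        using that L_pos capacity_pos by (intro mult_right_mono) auto
      also have "\<dots> \<le> s h" by (rule batch_start_lower[OF h])
      finally have "p \<in> queued_at P a s S h - S h"
        using p(1) unbatched infinity unfolding queued_at_def served_before_def by auto
      then have finished: "finished_by q T" if "q \<in> S h" for q
        using selected_finishes_first[OF h that _ p(2,3)] by blast
      have "a q \<le> T" if "q \<in> S h" for q
      proof -
        have "fst q < K" using batch_queued(1)[OF h that] P_users by (metis prod.collapse)
        then show ?thesis using arrived_if_finished[OF _ p(2) finished[OF that]] by blast
      qed
      moreover have "S h \<noteq> {}" using batch_card(2)[OF h] by auto
      ultimately show ?thesis using batch_queued(1)[OF h] by blast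
    qed
    then have "finite {h0..}"
      by (rule finite_of_disjoint_nonempty_subsets[OF loc_finite])
         (use batches_disjoint infinity in \<open>auto simp: disjoint_family_on_def\<close>)
    then show False using infinite_Ici by blast
  qed
qed

lemma batch_end_telescope:
  assumes "c \<le> h" and contiguous: "\<And>j. c < j \<Longrightarrow> j \<le> h \<Longrightarrow> s j = e (j - 1)"
  shows "e h = s c + real (\<Sum>j=c..h. card (S j)) * L / R"
  using assms
proof (induction h rule: dec_induct)
  case base
  then show ?case by (simp add: batch_end_def)
next
  case (step m)
  have "e m = s c + real (\<Sum>j=c..m. card (S j)) * L / R" using step.prems by (intro step.IH) auto
  moreover have "s (Suc m) = e m" using step.prems[of "Suc m"] step.hyps by simp
  ultimately show ?case
    using step.hyps by (simp add: batch_end_def add_divide_distrib distrib_right)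
qed

lemma batches_work_bound:
  assumes p: "fst p < K" "0 \<le> T" "finished_by p T" and h: "enat h < nb" "p \<in> S h"
    and J: "J \<subseteq> {..h}" "h \<in> J"
    and earlier: "\<And>j q. j \<in> J \<Longrightarrow> j < h \<Longrightarrow> q \<in> S j \<Longrightarrow> finished_by q T"
    and u: "0 \<le> u" and late: "\<And>j q. j \<in> J \<Longrightarrow> q \<in> S j \<Longrightarrow> finished_by q T \<Longrightarrow> u \<le> a q"
  shows "real (\<Sum>j\<in>J. card (S j)) * L \<le> R * (T - u) + (real M - 1) * L"
proof -
  have nb: "enat j < nb" if "j \<in> J" for j using batch_index_le[OF h(1)] J(1) that by auto
  have "finite J" using J(1) by (rule finite_subset) simp
  define U where "U = (\<Union>j\<in>J. S j)"
  define X where "X = {q \<in> U. finished_by q T}"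
  have "finite U" unfolding U_def using \<open>finite J\<close> nb batch_card(1) by blast
  have "X \<subseteq> U" unfolding X_def by blast
  have "(\<Sum>j\<in>J. card (S j)) = card U" unfolding U_def
  proof (rule card_UN_disjoint[symmetric, OF \<open>finite J\<close>])
    show "\<forall>j\<in>J. finite (S j)" using nb batch_card(1) by blast
    show "\<forall>i\<in>J. \<forall>j\<in>J. i \<noteq> j \<longrightarrow> S i \<inter> S j = {}"
    proof (intro ballI impI)
      fix i j assume "i \<in> J" "j \<in> J" "i \<noteq> j"
      then show "S i \<inter> S j = {}" using nb by (intro batches_disjoint) auto
    qed
  qed
  also have "\<dots> = card X + card (U - X)"
    using card_Diff_subset[OF finite_subset[OF \<open>X \<subseteq> U\<close> \<open>finite U\<close>] \<open>X \<subseteq> U\<close>]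
      card_mono[OF \<open>finite U\<close> \<open>X \<subseteq> U\<close>] by simp
  also have "card (U - X) \<le> card (S h - {p})"
  proof (rule card_mono)
    show "finite (S h - {p})" using batch_card(1)[OF h(1)] by simp
    show "U - X \<subseteq> S h - {p}"
    proof
      fix q assume "q \<in> U - X"
      then obtain j where j: "j \<in> J" "q \<in> S j" and unfinished: "\<not> finished_by q T"
        unfolding U_def X_def by blast
      have "j \<le> h" using J(1) j(1) by auto
      moreover have "\<not> j < h" using earlier[OF j(1) _ j(2)] unfinished by blast
      ultimately have "j = h" by simp
      then show "q \<in> S h - {p}" using j(2) unfinished p(3) by auto
    qed
  qed
  also have "card (S h - {p}) \<le> M - 1" using batch_card(3)[OF h(1)] h(2) by simp
  finally have "real (\<Sum>j\<in>J. card (S j)) \<le> real (card X) + (real M - 1)"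
    using M_pos by linarith
  then have "real (\<Sum>j\<in>J. card (S j)) * L \<le> real (card X) * L + (real M - 1) * L"
    using L_pos by (simp add: distrib_right[symmetric] mult_right_mono)
  moreover have "real (card X) * L \<le> R * (T - u)"
  proof (rule gps_work_bound_from[OF u p(2)])
    show "X \<subseteq> P" unfolding X_def U_def using batch_queued(1) nb by blast
    show "finite X" using finite_subset[OF \<open>X \<subseteq> U\<close> \<open>finite U\<close>] .
    show "X \<noteq> {}" using J(2) h(2) p(3) unfolding X_def U_def by blast
    fix q assume "q \<in> X"
    then obtain j where "j \<in> J" "q \<in> S j" "finished_by q T" unfolding X_def U_def by blast
    then show "finished_by q T \<and> u \<le> a q" using late by blast
  qed
  ultimately show ?thesis by linarith
qed

lemma last_boundary_batch:
  assumes h: "enat h < nb"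
  obtains c where "c \<le> h" and "c = 0 \<or> e (c - 1) < s c \<or> (c < h \<and> (\<exists>q\<in>S c. \<not> finished_by q T))"
    and "\<And>j. c < j \<Longrightarrow> j \<le> h \<Longrightarrow> s j = e (j - 1)"
    and "\<And>j q. c < j \<Longrightarrow> j < h \<Longrightarrow> q \<in> S j \<Longrightarrow> finished_by q T"
proof -
  define boundary where "boundary j \<longleftrightarrow>
    j = 0 \<or> e (j - 1) < s j \<or> (j < h \<and> (\<exists>q\<in>S j. \<not> finished_by q T))" for j
  define c where "c = (GREATEST j. j \<le> h \<and> boundary j)"
  have c: "c \<le> h" "boundary c"
    using GreatestI_nat[of "\<lambda>j. j \<le> h \<and> boundary j" 0 h] unfolding c_def boundary_def by auto
  have after_c: "s j = e (j - 1) \<and> (j < h \<longrightarrow> (\<forall>q\<in>S j. finished_by q T))" if "c < j" "j \<le> h" for j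
  proof -
    have "\<not> boundary j"
      using Greatest_le_nat[of "\<lambda>j. j \<le> h \<and> boundary j" j h] that unfolding c_def by auto
    moreover have "e (j - 1) \<le> s j" using batch_start[OF batch_index_le[OF h that(2)]] that by auto
    ultimately show ?thesis unfolding boundary_def by auto
  qed
  show thesis
  proof (rule that[OF c(1)])
    show "c = 0 \<or> e (c - 1) < s c \<or> (c < h \<and> (\<exists>q\<in>S c. \<not> finished_by q T))"
      using c(2) unfolding boundary_def .
    show "s j = e (j - 1)" if "c < j" "j \<le> h" for j using after_c[OF that] by blast
    show "finished_by q T" if "c < j" "j < h" "q \<in> S j" for j q using after_c[of j] that by simp
  qed
qed

lemma work_since_unfinished_batch:
  assumes p: "fst p < K" "0 \<le> T" "finished_by p T" and h: "enat h < nb" "p \<in> S h"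
    and c: "c < h" "q0 \<in> S c" "\<not> finished_by q0 T"
    and finished: "\<And>j q. c < j \<Longrightarrow> j < h \<Longrightarrow> q \<in> S j \<Longrightarrow> finished_by q T"
  shows "real (\<Sum>j=c..h. card (S j)) * L \<le> R * (T - s c) + (2 * real M - 1) * L"
proof -
  have cnb: "enat c < nb" using batch_index_le[OF h(1)] c(1) by simp
  have "real (\<Sum>j=Suc c..h. card (S j)) * L \<le> R * (T - s c) + (real M - 1) * L"
  proof (rule batches_work_bound[OF p h _ _ _ batch_start_nonneg[OF cnb]])
    fix j q assume "j \<in> {Suc c..h}" "j < h" "q \<in> S j"
    then show "finished_by q T" by (intro finished[of j]) auto
  next
    fix j q assume "j \<in> {Suc c..h}" "q \<in> S j" "finished_by q T"
    then have "s c < a q"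
      by (intro arrival_after_unfinished_batch[OF _ _ _ _ c(2,3) p(2)] batch_index_le[OF h(1)]) auto
    then show "s c \<le> a q" by simp
  qed (use c(1) in auto)
  moreover have "(\<Sum>j=c..h. card (S j)) = card (S c) + (\<Sum>j=Suc c..h. card (S j))"
    using c(1) by (simp add: sum.atLeast_Suc_atMost)
  moreover have "real (card (S c)) * L \<le> real M * L"
    using batch_card(3)[OF cnb] L_pos by (intro mult_right_mono) auto
  ultimately show ?thesis by (simp add: algebra_simps)
qed

lemma work_since_idle_start:
  assumes p: "fst p < K" "0 \<le> T" "finished_by p T" and h: "enat h < nb" "p \<in> S h"
    and c: "c \<le> h" "c = 0 \<or> e (c - 1) < s c"
    and finished: "\<And>j q. c \<le> j \<Longrightarrow> j < h \<Longrightarrow> q \<in> S j \<Longrightarrow> finished_by q T"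
  shows "real (\<Sum>j=c..h. card (S j)) * L \<le> R * (T - s c) + (real M - 1) * L"
proof (rule batches_work_bound[OF p h _ _ _ batch_start_nonneg])
  fix j q assume "j \<in> {c..h}" "j < h" "q \<in> S j"
  then show "finished_by q T" by (intro finished[of j]) auto
next
  fix j q assume "j \<in> {c..h}" "q \<in> S j"
  then show "s c \<le> a q"
    by (intro arrival_after_idle_start[OF batch_index_le[OF h(1) c(1)] c(2)]
        batch_index_le[OF h(1)]) auto
qed (use c(1) batch_index_le[OF h(1) c(1)] in auto)

text \<open>Let c be the last batch up to h that starts after an idle period or, before h, contains
  a packet unfinished by GPS at T.  Batches c, ..., h are transmitted back to back, and all their
  packets except at most M - 1 in batch h and, in the second case, those of batch c are
  finished by GPS at T and arrived at or after s c.\<close>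

lemma batch_end_le_finish:
  assumes p: "fst p < K" "0 \<le> T" "finished_by p T" and h: "enat h < nb" "p \<in> S h"
  shows "e h \<le> T + max_delay"
proof -
  obtain c where c: "c \<le> h"
    and boundary: "c = 0 \<or> e (c - 1) < s c \<or> (c < h \<and> (\<exists>q\<in>S c. \<not> finished_by q T))"
    and contiguous: "\<And>j. c < j \<Longrightarrow> j \<le> h \<Longrightarrow> s j = e (j - 1)"
    and finished: "\<And>j q. c < j \<Longrightarrow> j < h \<Longrightarrow> q \<in> S j \<Longrightarrow> finished_by q T"
    using last_boundary_batch[OF h(1), of T] by blast
  have work: "real (\<Sum>j=c..h. card (S j)) * L \<le> R * (T - s c) + (2 * real M - 1) * L"
  proof (cases "c < h \<and> (\<exists>q\<in>S c. \<not> finished_by q T)")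
    case True
    then obtain q0 where "c < h" "q0 \<in> S c" "\<not> finished_by q0 T" by blast
    then show ?thesis by (rule work_since_unfinished_batch[OF p h _ _ _ finished])
  next
    case False
    then have "c = 0 \<or> e (c - 1) < s c" using boundary by blast
    then have "real (\<Sum>j=c..h. card (S j)) * L \<le> R * (T - s c) + (real M - 1) * L"
      by (rule work_since_idle_start[OF p h c])
         (use False finished in \<open>fastforce simp: le_less\<close>)
    moreover have "(real M - 1) * L \<le> (2 * real M - 1) * L"
      using L_pos by (intro mult_right_mono) auto
    ultimately show ?thesis by linarith
  qed
  have "e h = s c + real (\<Sum>j=c..h. card (S j)) * L / R"
    by (rule batch_end_telescope[OF c contiguous])
  also have "\<dots> \<le> s c + (R * (T - s c) + (2 * real M - 1) * L) / R"
    using divide_right_mono[OF work, of R] capacity_pos by simp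
  also have "\<dots> = T + max_delay"
    using G.capacity_nonzero by (simp add: add_divide_distrib)
  finally show ?thesis .
qed

lemma finished_packet_batch:
  assumes "fst p < K" "0 \<le> T" "finished_by p T"
  obtains h where "enat h < nb" "p \<in> S h" "e h \<le> T + max_delay"
  using packet_batched[OF arrived_if_finished[OF assms, THEN conjunct1] assms(2,3)]
    batch_end_le_finish[OF assms] by blast

lemma served_in_ge:
  assumes "enat h < nb"
  shows "L - R * max 0 (e h - t) \<le> served_in h t"
  using packet_service_ge[OF capacity_pos L_pos, of "real (card (S h))" "s h" t]
    batch_card(2)[OF assms]
  by (simp add: batch_end_def)

lemma finite_started_batch_packets:
  "finite {(h, p). enat h < nb \<and> p \<in> S h \<and> fst p = k \<and> s h < t}"
proof -
  obtain H :: nat where H: "t / (L / R) < real H" using reals_Archimedean2 by blast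
  have "{(h, p). enat h < nb \<and> p \<in> S h \<and> fst p = k \<and> s h < t}
      \<subseteq> (\<Union>h\<in>{h. h < H \<and> enat h < nb}. {h} \<times> S h)"
  proof
    fix x assume "x \<in> {(h, p). enat h < nb \<and> p \<in> S h \<and> fst p = k \<and> s h < t}"
    then obtain h q where x: "x = (h, q)" "enat h < nb" "q \<in> S h" "s h < t" by auto
    then have "real h * (L / R) < t" using batch_start_lower[of h] by linarith
    moreover have "t < real H * (L / R)"
      by (metis H pos_divide_less_eq divide_pos_pos L_pos capacity_pos)
    ultimately have "real h < real H"
      using L_pos capacity_pos by (metis divide_pos_pos less_trans mult_less_cancel_right_pos)
    then show "x \<in> (\<Union>h\<in>{h. h < H \<and> enat h < nb}. {h} \<times> S h)" using x by auto
  qed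
  then show ?thesis by (rule finite_subset) (auto intro: batch_card(1))
qed

lemma mpgps_served_ge_sum:
  assumes "finite I" and batch: "\<And>i. i \<in> I \<Longrightarrow> enat (b i) < nb \<and> (k, i) \<in> S (b i)"
  shows "(\<Sum>i\<in>I. served_in (b i) t) \<le> mpgps_served L N r s S nb k t"
proof -
  define Q where "Q = {(h, p). enat h < nb \<and> p \<in> S h \<and> fst p = k \<and> s h < t}"
  have "finite Q" unfolding Q_def by (rule finite_started_batch_packets)
  have idle: "served_in h t = 0" if "t \<le> s h" for h
  proof -
    have "(t - s h) * R / real (card (S h)) \<le> 0"
      using that capacity_pos by (intro divide_nonpos_nonneg mult_nonpos_nonneg) auto
    then show ?thesis using L_pos by simp
  qed
  have "(\<Sum>i\<in>I. served_in (b i) t) = (\<Sum>i\<in>{i \<in> I. s (b i) < t}. served_in (b i) t)"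
  proof (rule sum.mono_neutral_right)
    show "\<forall>i\<in>I - {i \<in> I. s (b i) < t}. served_in (b i) t = 0" using idle by (auto simp: not_less)
  qed (use assms(1) in auto)
  also have "\<dots> = (\<Sum>x\<in>(\<lambda>i. (b i, (k, i))) ` {i \<in> I. s (b i) < t}. served_in (fst x) t)"
    by (subst sum.reindex) (auto simp: inj_on_def)
  also have "\<dots> \<le> (\<Sum>x\<in>Q. served_in (fst x) t)"
    by (rule sum_mono2[OF \<open>finite Q\<close>]) (use batch L_pos in \<open>auto simp: Q_def\<close>)
  also have "\<dots> = mpgps_served L N r s S nb k t"
    unfolding mpgps_served_def Q_def by (rule sum.cong) auto
  finally show ?thesis .
qed

lemma served_in_full:
  assumes "enat h < nb" "e h \<le> t"
  shows "served_in h t = L"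
  using served_in_ge[OF assms(1), of t] assms(2) by simp

lemma finished_packets_batches:
  assumes k: "k < K" and T: "0 \<le> T" and finished: "real n * L \<le> W k T"
  obtains b where "\<And>i. i < n \<Longrightarrow> enat (b i) < nb \<and> (k, i) \<in> S (b i) \<and> e (b i) \<le> T + max_delay"
proof -
  have "\<exists>h. enat h < nb \<and> (k, i) \<in> S h \<and> e h \<le> T + max_delay" if "i < n" for i
  proof -
    have "real (Suc i) * L \<le> real n * L" using that L_pos by (intro mult_right_mono) auto
    then have "finished_by (k, i) T" using finished by simp
    show ?thesis
      by (rule finished_packet_batch[of "(k, i)" T]) (use k T \<open>finished_by (k, i) T\<close> in auto)
  qed
  then show thesis using that by metis
qed

lemma lag_while_packet_in_progress:
  assumes k: "k < K" and T: "0 \<le> T" "T \<le> t" "t \<le> T + max_delay"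
    and WT: "W k T = real (Suc j) * L"
    and b: "\<And>i. i < j \<Longrightarrow> enat (b i) < nb \<and> (k, i) \<in> S (b i) \<and> e (b i) \<le> t"
  shows "W k t - mpgps_served L N r s S nb k t \<le> R * max_delay"
proof -
  obtain hj where hj: "enat hj < nb" "(k, j) \<in> S hj" "e hj \<le> T + max_delay"
    by (rule finished_packet_batch[of "(k, j)" T]) (use k T(1) WT in auto)
  define d where "d = max_delay"
  have "(\<Sum>i<Suc j. served_in ((b(j := hj)) i) t) \<le> mpgps_served L N r s S nb k t"
    by (rule mpgps_served_ge_sum) (use b hj in \<open>auto simp: less_Suc_eq\<close>)
  moreover have "(\<Sum>i<j. served_in ((b(j := hj)) i) t) = (\<Sum>i<j. L)"
    by (rule sum.cong) (use b served_in_full in auto)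
  ultimately have served: "real j * L + served_in hj t \<le> mpgps_served L N r s S nb k t" by simp
  have "R * max 0 (e hj - t) \<le> R * (T + d - t)"
    using hj(3) T(3) capacity_pos unfolding d_def by (intro mult_left_mono) auto
  then have "L - R * (T + d - t) \<le> served_in hj t" using served_in_ge[OF hj(1), of t] by linarith
  moreover have "W k t \<le> real (Suc j) * L + R * (t - T)"
    using G.service_increment_bounds(2)[OF k T(1,2)] WT by simp
  ultimately have "W k t - mpgps_served L N r s S nb k t
      \<le> (real (Suc j) * L + R * (t - T)) - (real j * L + (L - R * (T + d - t)))"
    using served by linarith
  also have "\<dots> = R * d" by (simp add: algebra_simps)
  finally show ?thesis unfolding d_def .
qed

text \<open>Packets that GPS finished by t - max_delay have been fully transmitted by MPGPS at t;
  the packet GPS is working on at that time lags by at most R max_delay.\<close>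

lemma service_lag_bound:
  assumes t: "0 \<le> t" and k: "k < K"
  shows "W k t - mpgps_served L N r s S nb k t \<le> (2 * real M - 1) * L"
proof -
  have Rd: "R * max_delay = (2 * real M - 1) * L" using G.capacity_nonzero by simp
  have "0 \<le> max_delay" using M_pos L_pos capacity_pos by simp
  have served_nonneg: "0 \<le> mpgps_served L N r s S nb k t"
    unfolding mpgps_served_def using L_pos by (intro sum_nonneg) auto
  show ?thesis
  proof (cases "t < max_delay")
    case True
    have "W k t \<le> R * t"
      using G.service_increment_bounds(2)[OF k order_refl t] G.service_zero[OF k] by simp
    also have "\<dots> \<le> R * max_delay" using True capacity_pos by (intro mult_left_mono) auto
    finally show ?thesis using Rd served_nonneg by linarith
  next
    case False
    define t' where "t' = t - max_delay"
    have t': "0 \<le> t'" "t' \<le> t" using False \<open>0 \<le> max_delay\<close> unfolding t'_def by auto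
    define j where "j = nat \<lfloor>W k t' / L\<rfloor>"
    have j: "real j * L \<le> W k t'" "W k t' < real (Suc j) * L"
      using nat_floor_divide_bounds[OF G.service_nonneg[OF k t'(1)] L_pos] unfolding j_def by auto
    obtain b where b: "\<And>i. i < j \<Longrightarrow> enat (b i) < nb \<and> (k, i) \<in> S (b i) \<and> e (b i) \<le> t"
      using finished_packets_batches[OF k t'(1) j(1)] unfolding t'_def by auto
    show ?thesis
    proof (cases "W k t \<le> real (Suc j) * L")
      case True
      have "(\<Sum>i<j. served_in (b i) t) \<le> mpgps_served L N r s S nb k t"
        by (rule mpgps_served_ge_sum) (use b in auto)
      moreover have "(\<Sum>i<j. served_in (b i) t) = (\<Sum>i<j. L)"
        by (rule sum.cong) (use b served_in_full in auto)
      moreover have "1 * L \<le> (2 * real M - 1) * L" using M_pos L_pos by (intro mult_right_mono) auto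
      ultimately show ?thesis using True by (simp add: algebra_simps)
    next
      case False
      obtain T where T: "t' \<le> T" "T \<le> t" "W k T = real (Suc j) * L"
        using G.service_ivt[OF k t'(1,2) less_imp_le[OF j(2)]] False by auto
      have "W k t - mpgps_served L N r s S nb k t \<le> R * max_delay"
        by (rule lag_while_packet_in_progress[OF k _ T(2) _ T(3) b])
           (use t' T(1) in \<open>auto simp: t'_def\<close>)
      then show ?thesis using Rd by simp
    qed
  qed
qed

end

theorem theorem3:
  fixes K N M :: nat and \<phi> :: "nat \<Rightarrow> real" and r L :: real
    and P :: "(nat \<times> nat) set" and a :: "nat \<times> nat \<Rightarrow> real"
    and W :: "nat \<Rightarrow> real \<Rightarrow> real" and Wt :: "real \<Rightarrow> nat \<Rightarrow> real \<Rightarrow> real"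
    and s :: "nat \<Rightarrow> real" and S :: "nat \<Rightarrow> (nat \<times> nat) set" and nb :: enat
  assumes phi_pos: "\<And>k. k < K \<Longrightarrow> \<phi> k > 0"
    and N_pos: "N \<ge> 1" and r_pos: "r > 0" and L_pos: "L > 0" and M_pos: "M \<ge> 1"
    and P_users: "\<And>k i. (k, i) \<in> P \<Longrightarrow> k < K"
    and P_closed: "\<And>k i j. (k, i) \<in> P \<Longrightarrow> j < i \<Longrightarrow> (k, j) \<in> P"
    and arr_nonneg: "\<And>p. p \<in> P \<Longrightarrow> a p \<ge> 0"
    and arr_mono: "\<And>k i j. (k, i) \<in> P \<Longrightarrow> j \<le> i \<Longrightarrow> a (k, j) \<le> a (k, i)"
    and loc_finite: "\<And>T. finite {p \<in> P. a p \<le> T}"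
    and gps: "is_gps K \<phi> N r (\<lambda>k t. cum_arr P a L k t) W"
    and gps_trunc: "\<And>\<tau>. \<tau> \<ge> 0 \<Longrightarrow> is_gps K \<phi> N r (\<lambda>k t. cum_arr P a L k (min t \<tau>)) (Wt \<tau>)"
    and mpgps: "is_mpgps P a L N r M Wt s S nb"
  shows "\<forall>t\<ge>0. \<forall>k<K. W k t - mpgps_served L N r s S nb k t \<le> (2 * real M - 1) * L"
proof -
  interpret mpgps_model K N M \<phi> r L P a W Wt s S nb
    by (rule mpgps_model.intro) (fact assms)+
  show ?thesis using service_lag_bound by blast
qed

end
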